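(* There exist absolute constants $0<c_1\le c_2$ and $\rho>0$ such that the following holds. Let $k\ge2$ be even and let $\delta\in\mathbb R^{k\times k}$, $\delta\neq0$, satisfy $\sum_{j\in[k]}\delta_{i_0j}=0$ and $\sum_{i\in[k]}\delta_{ij_0}=0$ for all $i_0,j_0\in[k]$. Let $X=(X_1,\dots,X_k)$ and $Y=(Y_1,\dots,Y_k)$ be independent, each uniformly distributed over the binary vectors in $\{0,1\}^k$ of Hamming weight $k/2$, and let $Z=\sum_{(i,j)\in[k]\times[k]}\delta_{ij}X_iY_j$. Then $$\Pr\Big[\frac{Z^2}{\|\delta\|_F^2}\in[c_1,c_2]\Big]\ge\rho .$$
   Context: $\|\delta\|_F^2=\sum_{i,j}\delta_{ij}^2$ is the squared Frobenius norm. *)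

theory Defs
  imports "HOL-Probability.Probability"
begin

text \<open>Indices [k] are rendered as {0..<k}. A binary vector in {0,1}^k is a function
  nat => real with values in {0,1} on {0..<k} and 0 outside (extensional, so the set is finite).\<close>

definition balanced_vecs :: "nat \<Rightarrow> (nat \<Rightarrow> real) set" where
  "balanced_vecs k = {x. (\<forall>i<k. x i \<in> {0, 1}) \<and> (\<forall>i. k \<le> i \<longrightarrow> x i = 0)
                        \<and> (\<Sum>i<k. x i) = real (k div 2)}"

definition frob_sq :: "nat \<Rightarrow> (nat \<Rightarrow> nat \<Rightarrow> real) \<Rightarrow> real" where
  "frob_sq k \<delta> = (\<Sum>i<k. \<Sum>j<k. (\<delta> i j)^2)"

definition bilin_Z :: "nat \<Rightarrow> (nat \<Rightarrow> nat \<Rightarrow> real) \<Rightarrow> (nat \<Rightarrow> real) \<Rightarrow> (nat \<Rightarrow> real) \<Rightarrow> real" where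
  "bilin_Z k \<delta> x y = (\<Sum>i<k. \<Sum>j<k. \<delta> i j * x i * y j)"

end

theory Submission
  imports Defs "HOL-Combinatorics.Transposition"
begin

(* Write Z = <a(Y), X> with a(Y)_i = sum_j delta_ij Y_j. The column sums of delta vanish, so
   sum_i a(Y)_i = 0, and the row sums vanish, so every row of delta also sums to 0.
   For a fixed vector a with sum_i a_i = 0, swapping two coordinates of X is a bijection of the
   balanced vectors, i.e. (X, X o (i j)) is an exchangeable pair. Summing the antisymmetric
   expression (f(X o (i j)) - f(X)) * (g(f(X o (i j))) + g(f(X))), f = <a, .>, over X and i, j gives 0:
   with g(w) = w this yields E <a,X>^2 = k |a|^2 / (4k - 4) exactly, with g(w) = w^3 it yields
   E <a,X>^4 <= 12 |a|^4. Hence E Z^2 = (k / (4k - 4))^2 |delta|_F^2 >= |delta|_F^2 / 16 and, by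
   Cauchy-Schwarz over pairs of rows, E Z^4 <= 144 |delta|_F^4. The Paley-Zygmund argument then
   bounds the probability that Z^2 / |delta|_F^2 lies in [1/32, 9216] from below by 1/589824. *)

definition lin_form :: "nat \<Rightarrow> (nat \<Rightarrow> real) \<Rightarrow> (nat \<Rightarrow> real) \<Rightarrow> real" where
  "lin_form k a x = (\<Sum>i<k. a i * x i)"

definition sq_norm :: "nat \<Rightarrow> (nat \<Rightarrow> real) \<Rightarrow> real" where
  "sq_norm k a = (\<Sum>i<k. (a i)^2)"

lemma sq_norm_nonneg: "0 \<le> sq_norm k a"
  unfolding sq_norm_def by (intro sum_nonneg) simp

lemma frob_sq_eq_sum_sq_norm: "frob_sq k \<delta> = (\<Sum>i<k. sq_norm k (\<delta> i))"
  by (simp add: frob_sq_def sq_norm_def)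

lemma bilin_Z_eq_lin_form: "bilin_Z k \<delta> x y = lin_form k (\<lambda>i. lin_form k (\<delta> i) y) x"
  unfolding bilin_Z_def lin_form_def by (intro sum.cong refl) (simp add: sum_distrib_left mult_ac)

lemma sum_pair_diff_prod:
  fixes a b :: "'a \<Rightarrow> real"
  shows "(\<Sum>i\<in>I. \<Sum>j\<in>I. (a i - a j) * (b i - b j))
    = 2 * (real (card I) * (\<Sum>i\<in>I. a i * b i) - sum a I * sum b I)"
proof -
  let ?ab = "\<Sum>i\<in>I. a i * b i"
  have "(\<Sum>i\<in>I. \<Sum>j\<in>I. (a i - a j) * (b i - b j))
    = (\<Sum>i\<in>I. \<Sum>j\<in>I. a i * b i) + (\<Sum>i\<in>I. \<Sum>j\<in>I. a j * b j)
      - (\<Sum>i\<in>I. \<Sum>j\<in>I. a i * b j) - (\<Sum>i\<in>I. \<Sum>j\<in>I. b i * a j)"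
    by (simp add: sum.distrib sum_subtractf algebra_simps)
  also have "\<dots> = real (card I) * ?ab + real (card I) * ?ab - sum a I * sum b I - sum b I * sum a I"
    by (simp add: sum_product sum_distrib_left[symmetric])
  finally show ?thesis by (simp add: algebra_simps)
qed

lemma diff_pow4_le: "(u - v)^4 \<le> 8 * u^4 + 8 * (v::real)^4"
proof -
  have "8 * u^4 + 8 * v^4 - (u - v)^4 = (u + v)^2 * (5 * (u - v)^2 + 2 * u^2 + 2 * v^2)"
    by algebra
  moreover have "0 \<le> (u + v)^2 * (5 * (u - v)^2 + 2 * u^2 + 2 * v^2)" by simp
  ultimately show ?thesis by linarith
qed

lemma sum_pow4_le_sq_sum_sq:
  fixes a :: "'a \<Rightarrow> real"
  assumes "finite I"
  shows "(\<Sum>i\<in>I. (a i)^4) \<le> (\<Sum>i\<in>I. (a i)^2)^2"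
proof -
  have "(\<Sum>i\<in>I. (a i)^4) \<le> (\<Sum>i\<in>I. (a i)^2 * (\<Sum>i\<in>I. (a i)^2))"
  proof (rule sum_mono)
    fix i assume "i \<in> I"
    then have "(a i)^2 \<le> (\<Sum>i\<in>I. (a i)^2)"
      using assms by (intro member_le_sum) auto
    then have "(a i)^2 * (a i)^2 \<le> (a i)^2 * (\<Sum>i\<in>I. (a i)^2)"
      by (rule mult_left_mono) simp
    moreover have "(a i)^4 = (a i)^2 * (a i)^2" by algebra
    ultimately show "(a i)^4 \<le> (a i)^2 * (\<Sum>i\<in>I. (a i)^2)" by linarith
  qed
  then show ?thesis by (simp add: sum_distrib_right[symmetric] power2_eq_square)
qed

lemma sum_pair_diff_pow4_le:
  fixes a :: "'a \<Rightarrow> real"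
  assumes "finite I"
  shows "(\<Sum>i\<in>I. \<Sum>j\<in>I. (a i - a j)^4) \<le> 16 * real (card I) * (\<Sum>i\<in>I. (a i)^2)^2"
proof -
  have "(\<Sum>i\<in>I. \<Sum>j\<in>I. (a i - a j)^4) \<le> (\<Sum>i\<in>I. \<Sum>j\<in>I. 8 * (a i)^4 + 8 * (a j)^4)"
    by (intro sum_mono diff_pow4_le)
  also have "\<dots> = 16 * real (card I) * (\<Sum>i\<in>I. (a i)^4)"
    by (simp add: sum.distrib sum_distrib_left[symmetric] sum_distrib_right[symmetric])
  also have "\<dots> \<le> 16 * real (card I) * (\<Sum>i\<in>I. (a i)^2)^2"
    using sum_pow4_le_sq_sum_sq[OF assms] by (intro mult_left_mono) auto
  finally show ?thesis .
qed

lemma sum_antisym_involution_eq_0: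
  fixes F :: "'a \<Rightarrow> 'a \<Rightarrow> real"
  assumes "\<And>x. x \<in> B \<Longrightarrow> \<sigma> x \<in> B" "\<And>x. x \<in> B \<Longrightarrow> \<sigma> (\<sigma> x) = x"
    and "\<And>u v. F u v = - F v u"
  shows "(\<Sum>x\<in>B. F x (\<sigma> x)) = 0"
proof -
  have "bij_betw \<sigma> B B"
    by (rule bij_betw_byWitness[where f'=\<sigma>]) (use assms(1,2) in auto)
  then have "(\<Sum>x\<in>B. F x (\<sigma> x)) = (\<Sum>x\<in>B. F (\<sigma> x) (\<sigma> (\<sigma> x)))"
    by (rule sum.reindex_bij_betw[symmetric])
  also have "\<dots> = (\<Sum>x\<in>B. - F x (\<sigma> x))"
    using assms(2) assms(3)[of "\<sigma> _" _] by (intro sum.cong) auto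
  also have "\<dots> = - (\<Sum>x\<in>B. F x (\<sigma> x))"
    by (rule sum_negf)
  finally show ?thesis by linarith
qed

lemma balanced_vecs_memD:
  assumes "x \<in> balanced_vecs k"
  shows "\<And>i. i < k \<Longrightarrow> x i = 0 \<or> x i = 1" "\<And>i. k \<le> i \<Longrightarrow> x i = 0"
    and "(\<Sum>i<k. x i) = real (k div 2)"
  using assms by (auto simp: balanced_vecs_def)

lemma finite_balanced_vecs: "finite (balanced_vecs k)"
proof (rule finite_subset)
  show "balanced_vecs k \<subseteq> (\<lambda>A i. if i \<in> A then 1 else 0) ` Pow {..<k}"
  proof
    fix x assume x: "x \<in> balanced_vecs k"
    have "x = (\<lambda>i. if i \<in> {i. i < k \<and> x i = 1} then 1 else 0)"
      using balanced_vecs_memD(1,2)[OF x] by (fastforce simp: fun_eq_iff not_less)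
    then show "x \<in> (\<lambda>A i. if i \<in> A then 1 else 0) ` Pow {..<k}" by blast
  qed
qed simp

lemma balanced_vecs_nonempty: "balanced_vecs k \<noteq> {}"
proof -
  let ?x = "\<lambda>i. if i < k div 2 then 1 else (0::real)"
  have "(\<Sum>i<k. ?x i) = (\<Sum>i<k div 2. 1)"
    by (rule sum.mono_neutral_cong_right) auto
  then have "?x \<in> balanced_vecs k" unfolding balanced_vecs_def by auto
  then show ?thesis by blast
qed

lemma lin_form_swap:
  assumes "i < k" "j < k"
  shows "lin_form k a (Fun.swap i j x) = lin_form k a x + (a i - a j) * (x j - x i)"
proof (cases "i = j")
  case False
  have "lin_form k a (Fun.swap i j x) - lin_form k a x
      = (\<Sum>l<k. (if l = i then a i * (x j - x i) else 0) + (if l = j then a j * (x i - x j) else 0))"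
    unfolding lin_form_def sum_subtractf[symmetric]
    by (rule sum.cong) (use False in \<open>auto simp: right_diff_distrib\<close>)
  also have "\<dots> = (a i - a j) * (x j - x i)"
    using assms by (simp add: sum.distrib algebra_simps)
  finally show ?thesis by simp
qed simp

lemma swap_in_balanced_vecs:
  assumes x: "x \<in> balanced_vecs k" and "i < k" "j < k"
  shows "Fun.swap i j x \<in> balanced_vecs k"
proof -
  have "(\<Sum>l<k. Fun.swap i j x l) = (\<Sum>l<k. x l)"
    using lin_form_swap[OF assms(2,3), of "\<lambda>_. 1" x] by (simp add: lin_form_def)
  moreover have "Transposition.transpose i j l < k \<longleftrightarrow> l < k" for l
    using assms(2,3) by (auto simp: Transposition.transpose_def)
  ultimately show ?thesis
    using balanced_vecs_memD[OF x] unfolding balanced_vecs_def by (auto simp flip: not_less)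
qed

lemma exchangeable_pair_identity:
  assumes swap_closed: "\<And>x i j. x \<in> B \<Longrightarrow> i < k \<Longrightarrow> j < k \<Longrightarrow> Fun.swap i j x \<in> B"
  shows "(\<Sum>x\<in>B. \<Sum>i<k. \<Sum>j<k. (a i - a j) * (x j - x i) *
            (g (lin_form k a x + (a i - a j) * (x j - x i)) + g (lin_form k a x))) = 0"
proof -
  have "(\<Sum>x\<in>B. (a i - a j) * (x j - x i) *
            (g (lin_form k a x + (a i - a j) * (x j - x i)) + g (lin_form k a x))) = 0"
    if "i < k" "j < k" for i j
  proof -
    have "(\<Sum>x\<in>B. (lin_form k a (Fun.swap i j x) - lin_form k a x) *
            (g (lin_form k a (Fun.swap i j x)) + g (lin_form k a x))) = 0"
      by (rule sum_antisym_involution_eq_0[where \<sigma> = "Fun.swap i j"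
            and F = "\<lambda>u v. (lin_form k a v - lin_form k a u) * (g (lin_form k a v) + g (lin_form k a u))"])
        (use swap_closed that in \<open>auto simp: algebra_simps\<close>)
    then show ?thesis by (simp add: lin_form_swap[OF that])
  qed
  then have "(\<Sum>i<k. \<Sum>j<k. \<Sum>x\<in>B. (a i - a j) * (x j - x i) *
            (g (lin_form k a x + (a i - a j) * (x j - x i)) + g (lin_form k a x))) = 0"
    by simp
  then show ?thesis by (simp add: sum.swap[of _ B])
qed

lemma sum_swap_increments:
  assumes "(\<Sum>i<k. a i) = 0"
  shows "(\<Sum>i<k. \<Sum>j<k. (a i - a j) * (x j - x i)) = - 2 * real k * lin_form k a x"
proof -
  have "(\<Sum>i<k. \<Sum>j<k. (a i - a j) * (x j - x i)) = - (\<Sum>i<k. \<Sum>j<k. (a i - a j) * (x i - x j))"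
    by (simp add: sum_negf[symmetric] algebra_simps)
  also have "\<dots> = - 2 * real k * lin_form k a x"
    using assms by (simp add: sum_pair_diff_prod lin_form_def)
  finally show ?thesis .
qed

lemma sum_sq_swap_increments:
  assumes x: "x \<in> balanced_vecs k" and a0: "(\<Sum>i<k. a i) = 0" and "even k"
  shows "(\<Sum>i<k. \<Sum>j<k. ((a i - a j) * (x j - x i))^2)
    = real k * sq_norm k a + 4 * (lin_form k a x)^2"
proof -
  define S where "S = (\<Sum>i<k. \<Sum>j<k. (a i - a j)^2 * (x i * (1 - x j)))"
  have half: "(\<Sum>i<k. x i) = real k / 2" "(\<Sum>i<k. 1 - x i) = real k / 2"
    using balanced_vecs_memD(3)[OF x] \<open>even k\<close> by (auto simp: sum_subtractf elim: evenE)
  \<comment> \<open>only pairs with \<open>x i \<noteq> x j\<close> contribute, and each unordered such pair is counted twice\<close>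
  have "((a i - a j) * (x j - x i))^2
      = (a i - a j)^2 * (x i * (1 - x j)) + (a j - a i)^2 * (x j * (1 - x i))" if "i < k" "j < k" for i j
    using balanced_vecs_memD(1)[OF x that(1)] balanced_vecs_memD(1)[OF x that(2)]
    by (auto simp: power2_eq_square algebra_simps)
  then have "(\<Sum>i<k. \<Sum>j<k. ((a i - a j) * (x j - x i))^2)
      = S + (\<Sum>i<k. \<Sum>j<k. (a j - a i)^2 * (x j * (1 - x i)))"
    unfolding S_def by (simp add: sum.distrib)
  also have "(\<Sum>i<k. \<Sum>j<k. (a j - a i)^2 * (x j * (1 - x i))) = S"
    unfolding S_def by (rule sum.swap)
  finally have sum_eq: "(\<Sum>i<k. \<Sum>j<k. ((a i - a j) * (x j - x i))^2) = 2 * S" by simp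
  have "S = (\<Sum>i<k. \<Sum>j<k. (a i)^2 * x i * (1 - x j) + x i * ((a j)^2 * (1 - x j))
      - 2 * (a i * x i * (a j * (1 - x j))))"
    unfolding S_def by (intro sum.cong refl) (simp add: power2_eq_square algebra_simps)
  also have "\<dots> = (\<Sum>i<k. (a i)^2 * x i) * (\<Sum>j<k. 1 - x j) + (\<Sum>i<k. x i) * (\<Sum>j<k. (a j)^2 * (1 - x j))
      - 2 * (lin_form k a x * (\<Sum>j<k. a j * (1 - x j)))"
    unfolding sum_product lin_form_def by (simp add: sum.distrib sum_subtractf sum_distrib_left)
  finally have S_eq: "S = \<dots>" .
  have sq_norm_split: "sq_norm k a = (\<Sum>i<k. (a i)^2 * x i) + (\<Sum>j<k. (a j)^2 * (1 - x j))"
    by (simp add: sq_norm_def sum.distrib[symmetric] algebra_simps)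
  have "(\<Sum>j<k. a j * (1 - x j)) = - lin_form k a x"
    using a0 by (simp add: lin_form_def sum_subtractf algebra_simps)
  then show ?thesis
    unfolding sum_eq S_eq half sq_norm_split by (simp add: algebra_simps power2_eq_square)
qed

lemma sum_lin_form_sq_balanced_vecs:
  assumes "even k" and a0: "(\<Sum>i<k. a i) = 0"
  shows "(\<Sum>x\<in>balanced_vecs k. (lin_form k a x)^2) * (4 * real k - 4)
    = real (card (balanced_vecs k)) * real k * sq_norm k a"
proof -
  have increment_sum: "(\<Sum>i<k. \<Sum>j<k. (a i - a j) * (x j - x i) *
        ((lin_form k a x + (a i - a j) * (x j - x i)) + lin_form k a x))
      = real k * sq_norm k a - (4 * real k - 4) * (lin_form k a x)^2"
    if x: "x \<in> balanced_vecs k" for x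
  proof -
    define V where "V = lin_form k a x"
    have "(\<Sum>i<k. \<Sum>j<k. (a i - a j) * (x j - x i) * ((V + (a i - a j) * (x j - x i)) + V))
        = (\<Sum>i<k. \<Sum>j<k. 2 * V * ((a i - a j) * (x j - x i)) + ((a i - a j) * (x j - x i))^2)"
      by (intro sum.cong refl) (simp add: power2_eq_square algebra_simps)
    also have "\<dots> = 2 * V * (\<Sum>i<k. \<Sum>j<k. (a i - a j) * (x j - x i))
          + (\<Sum>i<k. \<Sum>j<k. ((a i - a j) * (x j - x i))^2)"
      by (simp add: sum.distrib sum_distrib_left)
    also have "\<dots> = real k * sq_norm k a - (4 * real k - 4) * V^2"
      unfolding sum_swap_increments[OF a0] sum_sq_swap_increments[OF x a0 \<open>even k\<close>] V_def
      by (simp add: algebra_simps power2_eq_square)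
    finally show ?thesis unfolding V_def .
  qed
  have "0 = (\<Sum>x\<in>balanced_vecs k. \<Sum>i<k. \<Sum>j<k. (a i - a j) * (x j - x i) *
        (id (lin_form k a x + (a i - a j) * (x j - x i)) + id (lin_form k a x)))"
    by (rule exchangeable_pair_identity[symmetric]) (rule swap_in_balanced_vecs)
  also have "\<dots> = (\<Sum>x\<in>balanced_vecs k. real k * sq_norm k a - (4 * real k - 4) * (lin_form k a x)^2)"
    using increment_sum by (intro sum.cong) auto
  also have "\<dots> = real (card (balanced_vecs k)) * real k * sq_norm k a
      - (\<Sum>x\<in>balanced_vecs k. (lin_form k a x)^2) * (4 * real k - 4)"
    by (simp add: sum_subtractf sum_distrib_left sum_distrib_right mult_ac)
  finally show ?thesis by simp
qed

lemma sum_lin_form_sq_balanced_vecs_le: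
  assumes "even k" "2 \<le> k" "(\<Sum>i<k. a i) = 0"
  shows "(\<Sum>x\<in>balanced_vecs k. (lin_form k a x)^2) \<le> real (card (balanced_vecs k)) * sq_norm k a / 2"
proof -
  let ?S = "\<Sum>x\<in>balanced_vecs k. (lin_form k a x)^2" and ?N = "real (card (balanced_vecs k))"
  have "?S * (4 * real k - 4) = ?N * real k * sq_norm k a"
    by (rule sum_lin_form_sq_balanced_vecs[OF assms(1,3)])
  also have "\<dots> \<le> ?N * (2 * real k - 2) * sq_norm k a"
    using assms(2) sq_norm_nonneg[of k a] by (intro mult_right_mono mult_left_mono) auto
  finally have "?S * (4 * real k - 4) \<le> (?N * sq_norm k a / 2) * (4 * real k - 4)"
    by (simp add: algebra_simps)
  moreover have "0 < 4 * real k - 4" using assms(2) by simp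
  ultimately show ?thesis by simp
qed

lemma exchange_cube_bound:
  fixes V D c :: real
  assumes "D^2 \<le> c"
  shows "D * ((V + D)^3 + V^3) \<le> 2 * V^3 * D + 9/2 * V^2 * c + 5/2 * c^2"
proof -
  have "D * ((V + D)^3 + V^3) = 2 * V^3 * D + 3 * V^2 * D^2 + 3 * V * D^3 + D^4" by algebra
  also have "\<dots> \<le> 2 * V^3 * D + 9/2 * V^2 * D^2 + 5/2 * (D^2)^2"
  proof -
    have "3 * V * D^3 \<le> 3/2 * D^2 * (V^2 + D^2)"
      using zero_le_power2[of "D * (V - D)"] by (simp add: power2_eq_square power3_eq_cube algebra_simps)
    then show ?thesis by (simp add: power2_eq_square power4_eq_xxxx algebra_simps)
  qed
  also have "\<dots> \<le> 2 * V^3 * D + 9/2 * V^2 * c + 5/2 * c^2"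
    using assms mult_left_mono[OF assms, of "V^2"] power_mono[OF assms, of 2] by simp
  finally show ?thesis .
qed

lemma sum_cube_swap_increments_le:
  assumes x: "x \<in> balanced_vecs k" and a0: "(\<Sum>i<k. a i) = 0"
  shows "(\<Sum>i<k. \<Sum>j<k. (a i - a j) * (x j - x i) *
            ((lin_form k a x + (a i - a j) * (x j - x i))^3 + (lin_form k a x)^3))
    \<le> - 4 * real k * (lin_form k a x)^4 + 9 * real k * sq_norm k a * (lin_form k a x)^2
      + 40 * real k * (sq_norm k a)^2"
proof -
  define V where "V = lin_form k a x"
  have "(\<Sum>i<k. \<Sum>j<k. (a i - a j) * (x j - x i) * ((V + (a i - a j) * (x j - x i))^3 + V^3))
      \<le> (\<Sum>i<k. \<Sum>j<k. 2 * V^3 * ((a i - a j) * (x j - x i)) + 9/2 * V^2 * (a i - a j)^2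
          + 5/2 * (a i - a j)^4)"
  proof (intro sum_mono)
    fix i j assume "i \<in> {..<k}" "j \<in> {..<k}"
    then have "(x j - x i)^2 \<le> 1"
      using balanced_vecs_memD(1)[OF x, of i] balanced_vecs_memD(1)[OF x, of j] by auto
    then have "((a i - a j) * (x j - x i))^2 \<le> (a i - a j)^2"
      using mult_left_mono[of "(x j - x i)^2" 1 "(a i - a j)^2"] by (simp add: power_mult_distrib)
    from exchange_cube_bound[OF this, of V]
    show "(a i - a j) * (x j - x i) * ((V + (a i - a j) * (x j - x i))^3 + V^3)
        \<le> 2 * V^3 * ((a i - a j) * (x j - x i)) + 9/2 * V^2 * (a i - a j)^2 + 5/2 * (a i - a j)^4"
      by (simp add: power_mult[symmetric])
  qed
  also have "\<dots> = 2 * V^3 * (\<Sum>i<k. \<Sum>j<k. (a i - a j) * (x j - x i))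
      + 9/2 * V^2 * (\<Sum>i<k. \<Sum>j<k. (a i - a j) * (a i - a j))
      + 5/2 * (\<Sum>i<k. \<Sum>j<k. (a i - a j)^4)"
    by (simp add: sum.distrib sum_distrib_left power2_eq_square)
  also have "\<dots> \<le> 2 * V^3 * (- 2 * real k * V) + 9/2 * V^2 * (2 * real k * sq_norm k a)
      + 5/2 * (16 * real k * (sq_norm k a)^2)"
  proof -
    have sq: "(\<Sum>i<k. \<Sum>j<k. (a i - a j) * (a i - a j)) = 2 * real k * sq_norm k a"
      using sum_pair_diff_prod[of a a "{..<k}"] a0 by (simp add: sq_norm_def power2_eq_square)
    have "(\<Sum>i<k. \<Sum>j<k. (a i - a j)^4) \<le> 16 * real k * (sq_norm k a)^2"
      using sum_pair_diff_pow4_le[of "{..<k}" a] by (simp add: sq_norm_def)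
    then show ?thesis
      unfolding sum_swap_increments[OF a0] V_def sq by simp
  qed
  also have "\<dots> = - 4 * real k * V^4 + 9 * real k * sq_norm k a * V^2 + 40 * real k * (sq_norm k a)^2"
    by (simp add: algebra_simps power2_eq_square power3_eq_cube power4_eq_xxxx)
  finally show ?thesis unfolding V_def .
qed

lemma sum_lin_form_pow4_balanced_vecs_le:
  assumes "even k" "2 \<le> k" and a0: "(\<Sum>i<k. a i) = 0"
  shows "(\<Sum>x\<in>balanced_vecs k. (lin_form k a x)^4)
    \<le> 12 * real (card (balanced_vecs k)) * (sq_norm k a)^2"
proof -
  let ?S4 = "\<Sum>x\<in>balanced_vecs k. (lin_form k a x)^4" and ?S2 = "\<Sum>x\<in>balanced_vecs k. (lin_form k a x)^2"
    and ?N = "real (card (balanced_vecs k))" and ?P = "sq_norm k a"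
  have "0 = (\<Sum>x\<in>balanced_vecs k. \<Sum>i<k. \<Sum>j<k. (a i - a j) * (x j - x i) *
        ((\<lambda>w. w^3) (lin_form k a x + (a i - a j) * (x j - x i)) + (\<lambda>w. w^3) (lin_form k a x)))"
    by (rule exchangeable_pair_identity[symmetric]) (rule swap_in_balanced_vecs)
  also have "\<dots> \<le> (\<Sum>x\<in>balanced_vecs k. - 4 * real k * (lin_form k a x)^4
      + 9 * real k * ?P * (lin_form k a x)^2 + 40 * real k * ?P^2)"
    using sum_cube_swap_increments_le[OF _ a0] by (intro sum_mono) auto
  also have "\<dots> = - 4 * real k * ?S4 + 9 * real k * ?P * ?S2 + 40 * real k * ?P^2 * ?N"
    by (simp add: sum.distrib sum_subtractf sum_distrib_left[symmetric])
  also have "\<dots> = real k * (9 * (?P * ?S2) + 40 * (?N * ?P^2) - 4 * ?S4)"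
    by (simp add: algebra_simps)
  finally have "0 \<le> 9 * (?P * ?S2) + 40 * (?N * ?P^2) - 4 * ?S4"
    using assms(2) by (simp add: zero_le_mult_iff)
  moreover have "?P * ?S2 \<le> ?N * ?P^2 / 2"
    using mult_left_mono[OF sum_lin_form_sq_balanced_vecs_le[OF assms] sq_norm_nonneg[of k a]]
    by (simp add: power2_eq_square algebra_simps)
  moreover have "0 \<le> ?N * ?P^2" by simp
  ultimately have "?S4 \<le> 12 * (?N * ?P^2)" by linarith
  then show ?thesis by (simp add: mult.assoc)
qed

lemma sum_row_lin_forms_eq_0:
  assumes "\<forall>j<k. (\<Sum>i<k. \<delta> i j) = 0"
  shows "(\<Sum>i<k. lin_form k (\<delta> i) y) = 0"
proof -
  have "(\<Sum>i<k. lin_form k (\<delta> i) y) = (\<Sum>j<k. (\<Sum>i<k. \<delta> i j) * y j)"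
    unfolding lin_form_def by (subst sum.swap) (simp add: sum_distrib_right)
  also have "\<dots> = 0" using assms by simp
  finally show ?thesis .
qed

lemma sum_bilin_Z_sq:
  assumes "even k"
    and rows: "\<forall>i<k. (\<Sum>j<k. \<delta> i j) = 0" and cols: "\<forall>j<k. (\<Sum>i<k. \<delta> i j) = 0"
  shows "(\<Sum>(x, y)\<in>balanced_vecs k \<times> balanced_vecs k. (bilin_Z k \<delta> x y)^2) * (4 * real k - 4)^2
    = (real (card (balanced_vecs k)))^2 * (real k)^2 * frob_sq k \<delta>"
proof -
  let ?B = "balanced_vecs k" and ?N = "real (card (balanced_vecs k))" and ?c = "4 * real k - 4"
  have "(\<Sum>(x, y)\<in>?B \<times> ?B. (bilin_Z k \<delta> x y)^2) = (\<Sum>y\<in>?B. \<Sum>x\<in>?B. (bilin_Z k \<delta> x y)^2)"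
    unfolding sum.cartesian_product[symmetric] by (rule sum.swap)
  then have "(\<Sum>(x, y)\<in>?B \<times> ?B. (bilin_Z k \<delta> x y)^2) * ?c
      = (\<Sum>y\<in>?B. (\<Sum>x\<in>?B. (bilin_Z k \<delta> x y)^2) * ?c)"
    by (simp add: sum_distrib_right)
  also have "\<dots> = (\<Sum>y\<in>?B. ?N * real k * (\<Sum>i<k. (lin_form k (\<delta> i) y)^2))"
    unfolding bilin_Z_eq_lin_form
    using sum_lin_form_sq_balanced_vecs[OF \<open>even k\<close> sum_row_lin_forms_eq_0[OF cols]]
    by (simp add: sq_norm_def)
  also have "\<dots> = ?N * real k * (\<Sum>i<k. \<Sum>y\<in>?B. (lin_form k (\<delta> i) y)^2)"
    by (simp add: sum_distrib_left[symmetric] sum.swap[of _ "{..<k}" ?B])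
  finally have first: "(\<Sum>(x, y)\<in>?B \<times> ?B. (bilin_Z k \<delta> x y)^2) * ?c
      = ?N * real k * (\<Sum>i<k. \<Sum>y\<in>?B. (lin_form k (\<delta> i) y)^2)" .
  have "(\<Sum>i<k. \<Sum>y\<in>?B. (lin_form k (\<delta> i) y)^2) * ?c
      = (\<Sum>i<k. (\<Sum>y\<in>?B. (lin_form k (\<delta> i) y)^2) * ?c)"
    by (rule sum_distrib_right)
  also have "\<dots> = (\<Sum>i<k. ?N * real k * sq_norm k (\<delta> i))"
    using sum_lin_form_sq_balanced_vecs[OF \<open>even k\<close>] rows by simp
  also have "\<dots> = ?N * real k * frob_sq k \<delta>"
    by (simp add: frob_sq_eq_sum_sq_norm sum_distrib_left)
  finally have second: "(\<Sum>i<k. \<Sum>y\<in>?B. (lin_form k (\<delta> i) y)^2) * ?c = ?N * real k * frob_sq k \<delta>" .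
  have "(\<Sum>(x, y)\<in>?B \<times> ?B. (bilin_Z k \<delta> x y)^2) * ?c^2
      = ?N * real k * ((\<Sum>i<k. \<Sum>y\<in>?B. (lin_form k (\<delta> i) y)^2) * ?c)"
    using first by (simp add: power2_eq_square mult_ac)
  also have "\<dots> = ?N^2 * (real k)^2 * frob_sq k \<delta>"
    unfolding second by (simp add: power2_eq_square)
  finally show ?thesis .
qed

lemma sum_lin_form_sq_mult_le:
  assumes "even k" "2 \<le> k" "(\<Sum>i<k. u i) = 0" "(\<Sum>i<k. v i) = 0"
  shows "(\<Sum>y\<in>balanced_vecs k. (lin_form k u y)^2 * (lin_form k v y)^2)
    \<le> 12 * real (card (balanced_vecs k)) * sq_norm k u * sq_norm k v"
proof -
  let ?B = "balanced_vecs k" and ?N = "real (card (balanced_vecs k))"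
  have "(\<Sum>y\<in>?B. (lin_form k u y)^2 * (lin_form k v y)^2)^2
      \<le> (\<Sum>y\<in>?B. (lin_form k u y)^4) * (\<Sum>y\<in>?B. (lin_form k v y)^4)"
    using Cauchy_Schwarz_ineq_sum[of "\<lambda>y. (lin_form k u y)^2" "\<lambda>y. (lin_form k v y)^2" ?B]
    by (simp add: power_mult[symmetric])
  also have "\<dots> \<le> (12 * ?N * (sq_norm k u)^2) * (12 * ?N * (sq_norm k v)^2)"
    using sum_lin_form_pow4_balanced_vecs_le[OF assms(1,2)] assms(3,4)
    by (intro mult_mono) (auto intro: sum_nonneg)
  also have "\<dots> = (12 * ?N * sq_norm k u * sq_norm k v)^2"
    by (simp add: power2_eq_square mult_ac)
  finally show ?thesis
    by (rule power2_le_imp_le) (simp add: sq_norm_nonneg)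
qed

lemma sum_bilin_Z_pow4_le:
  assumes "even k" "2 \<le> k"
    and rows: "\<forall>i<k. (\<Sum>j<k. \<delta> i j) = 0" and cols: "\<forall>j<k. (\<Sum>i<k. \<delta> i j) = 0"
  shows "(\<Sum>(x, y)\<in>balanced_vecs k \<times> balanced_vecs k. (bilin_Z k \<delta> x y)^4)
    \<le> 144 * (real (card (balanced_vecs k)))^2 * (frob_sq k \<delta>)^2"
proof -
  let ?B = "balanced_vecs k" and ?N = "real (card (balanced_vecs k))"
  define w where "w i y = (lin_form k (\<delta> i) y)^2" for i y
  have "(\<Sum>(x, y)\<in>?B \<times> ?B. (bilin_Z k \<delta> x y)^4) = (\<Sum>y\<in>?B. \<Sum>x\<in>?B. (bilin_Z k \<delta> x y)^4)"
    unfolding sum.cartesian_product[symmetric] by (rule sum.swap)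
  also have "\<dots> \<le> (\<Sum>y\<in>?B. 12 * ?N * (\<Sum>i<k. w i y)^2)"
    unfolding bilin_Z_eq_lin_form
    using sum_lin_form_pow4_balanced_vecs_le[OF assms(1,2) sum_row_lin_forms_eq_0[OF cols]]
    by (intro sum_mono) (simp add: sq_norm_def w_def)
  also have "\<dots> = 12 * ?N * (\<Sum>y\<in>?B. \<Sum>i<k. \<Sum>i'<k. w i y * w i' y)"
    by (simp add: power2_eq_square sum_product sum_distrib_left[symmetric])
  also have "\<dots> = 12 * ?N * (\<Sum>i<k. \<Sum>i'<k. \<Sum>y\<in>?B. w i y * w i' y)"
    using sum.swap[of "\<lambda>y i. \<Sum>i'<k. w i y * w i' y" "{..<k}" ?B]
      sum.swap[of "\<lambda>y i'. w i y * w i' y" "{..<k}" ?B for i] by simp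
  also have "\<dots> \<le> 12 * ?N * (\<Sum>i<k. \<Sum>i'<k. 12 * ?N * sq_norm k (\<delta> i) * sq_norm k (\<delta> i'))"
    unfolding w_def using rows
    by (intro mult_left_mono sum_mono sum_lin_form_sq_mult_le[OF assms(1,2)]) auto
  also have "\<dots> = 144 * ?N^2 * (frob_sq k \<delta>)^2"
    by (simp add: frob_sq_eq_sum_sq_norm power2_eq_square sum_product sum_distrib_left mult_ac)
  finally show ?thesis .
qed

lemma sum_le_card_interval:
  fixes v :: "'a \<Rightarrow> real" and c1 c2 :: real
  assumes "finite A" "\<And>p. p \<in> A \<Longrightarrow> 0 \<le> v p" "0 \<le> c1" "0 < c2"
  shows "sum v A \<le> c1 * card A + c2 * card (A \<inter> {p. v p \<in> {c1..c2}}) + (\<Sum>p\<in>A. (v p)^2) / c2"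
proof -
  have "v p \<le> c1 + c2 * of_bool (v p \<in> {c1..c2}) + (v p)^2 / c2" if "p \<in> A" for p
  proof (cases "c2 < v p")
    case True
    then have "v p * c2 \<le> v p * v p"
      using assms(4) by (intro mult_left_mono) auto
    then have "v p \<le> (v p)^2 / c2"
      using assms(4) by (simp add: field_simps power2_eq_square)
    then show ?thesis using assms(3) True by simp
  next
    case False
    define q where "q = (v p)^2 / c2"
    have "0 \<le> q" unfolding q_def using assms(4) by simp
    then show ?thesis unfolding q_def[symmetric] using False assms(2)[OF that] assms(3) by auto
  qed
  then have "sum v A \<le> (\<Sum>p\<in>A. c1 + c2 * of_bool (v p \<in> {c1..c2}) + (v p)^2 / c2)"
    by (rule sum_mono)
  also have "\<dots> = c1 * card A + c2 * card (A \<inter> {p. v p \<in> {c1..c2}}) + (\<Sum>p\<in>A. (v p)^2) / c2"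
    using assms(1) by (simp add: sum.distrib sum_distrib_left[symmetric] sum_divide_distrib)
  finally show ?thesis .
qed

lemma pair_pmf_of_set:
  assumes "finite A" "A \<noteq> {}" "finite B" "B \<noteq> {}"
  shows "pair_pmf (pmf_of_set A) (pmf_of_set B) = pmf_of_set (A \<times> B)"
proof (rule pmf_eqI)
  fix p :: "'a \<times> 'b"
  show "pmf (pair_pmf (pmf_of_set A) (pmf_of_set B)) p = pmf (pmf_of_set (A \<times> B)) p"
    using assms by (cases p) (simp add: pmf_pair indicator_times card_cartesian_product)
qed

lemma frob_sq_pos:
  assumes "\<exists>i<k. \<exists>j<k. \<delta> i j \<noteq> 0"
  shows "0 < frob_sq k \<delta>"
proof -
  obtain i j where ij: "i < k" "j < k" "\<delta> i j \<noteq> 0" using assms by blast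
  have "0 < sq_norm k (\<delta> i)"
    unfolding sq_norm_def using ij by (intro sum_pos2[of _ j]) auto
  then show ?thesis
    unfolding frob_sq_eq_sum_sq_norm using ij(1) sq_norm_nonneg by (intro sum_pos2[of _ i]) auto
qed

lemma prob_bilin_Z_sq_in_interval:
  assumes "even k" "2 \<le> k" "\<exists>i<k. \<exists>j<k. \<delta> i j \<noteq> 0"
    and rows: "\<forall>i<k. (\<Sum>j<k. \<delta> i j) = 0" and cols: "\<forall>j<k. (\<Sum>i<k. \<delta> i j) = 0"
  shows "measure_pmf.prob (pair_pmf (pmf_of_set (balanced_vecs k)) (pmf_of_set (balanced_vecs k)))
      {(x, y). (bilin_Z k \<delta> x y)^2 / frob_sq k \<delta> \<in> {1/32..9216}} \<ge> 1/589824"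
proof -
  let ?B = "balanced_vecs k"
  define N where "N = real (card ?B)"
  define F where "F = frob_sq k \<delta>"
  define v where "v = (\<lambda>(x, y). (bilin_Z k \<delta> x y)^2 / F)"
  define S where "S = {(x, y). (bilin_Z k \<delta> x y)^2 / frob_sq k \<delta> \<in> {1/32..9216::real}}"
  have fin: "finite (?B \<times> ?B)" and ne: "?B \<noteq> {}"
    using finite_balanced_vecs balanced_vecs_nonempty by auto
  have card: "real (card (?B \<times> ?B)) = N^2"
    unfolding N_def card_cartesian_product by (simp add: power2_eq_square)
  have "N > 0" using ne finite_balanced_vecs unfolding N_def by (simp add: card_gt_0_iff)
  have "F > 0" unfolding F_def by (rule frob_sq_pos) fact
  have S_eq: "S = {p. v p \<in> {1/32..9216}}" unfolding S_def v_def F_def by auto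
  have "(4 * real k - 4)^2 \<le> 16 * (real k)^2"
    using power_mono[of "4 * real k - 4" "4 * real k" 2] \<open>2 \<le> k\<close> by (simp add: power_mult_distrib)
  then have "N^2 * (4 * real k - 4)^2 \<le> N^2 * (16 * (real k)^2)"
    by (rule mult_left_mono) simp
  then have "N^2 / 16 \<le> N^2 * (real k)^2 / (4 * real k - 4)^2"
    using \<open>2 \<le> k\<close> by (simp add: field_simps)
  also have "\<dots> = sum v (?B \<times> ?B)"
    using sum_bilin_Z_sq[OF \<open>even k\<close> rows cols] \<open>F > 0\<close> \<open>2 \<le> k\<close>
    unfolding v_def N_def F_def by (simp add: sum_divide_distrib[symmetric] case_prod_beta field_simps)
  also have "\<dots> \<le> 1/32 * N^2 + 9216 * card (?B \<times> ?B \<inter> S) + (\<Sum>p\<in>?B \<times> ?B. (v p)^2) / 9216"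
    using sum_le_card_interval[OF fin, of v "1/32" 9216] \<open>F > 0\<close>
    unfolding card S_eq by (simp add: v_def case_prod_beta)
  also have "(\<Sum>p\<in>?B \<times> ?B. (v p)^2) \<le> 144 * N^2"
  proof -
    have "(\<Sum>p\<in>?B \<times> ?B. (v p)^2) = (\<Sum>(x, y)\<in>?B \<times> ?B. (bilin_Z k \<delta> x y)^4) / F^2"
      unfolding v_def by (simp add: sum_divide_distrib case_prod_beta power_divide power_mult[symmetric])
    also have "\<dots> \<le> 144 * N^2"
      using sum_bilin_Z_pow4_le[OF \<open>even k\<close> \<open>2 \<le> k\<close> rows cols] \<open>F > 0\<close>
      unfolding N_def F_def by (simp add: divide_le_eq)
    finally show ?thesis .
  qed
  finally have "N^2 / 589824 \<le> card (?B \<times> ?B \<inter> S)" by simp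
  then show ?thesis
    using \<open>N > 0\<close> unfolding S_def[symmetric] pair_pmf_of_set[OF finite_balanced_vecs ne finite_balanced_vecs ne]
    by (simp add: measure_pmf_of_set fin ne card field_simps)
qed

theorem theorem6p6:
  shows "\<exists>c1 c2 \<rho>::real. 0 < c1 \<and> c1 \<le> c2 \<and> 0 < \<rho> \<and>
    (\<forall>(k::nat) (\<delta>::nat \<Rightarrow> nat \<Rightarrow> real).
       even k \<longrightarrow> 2 \<le> k \<longrightarrow>
       (\<exists>i<k. \<exists>j<k. \<delta> i j \<noteq> 0) \<longrightarrow>
       (\<forall>i0<k. (\<Sum>j<k. \<delta> i0 j) = 0) \<longrightarrow>
       (\<forall>j0<k. (\<Sum>i<k. \<delta> i j0) = 0) \<longrightarrow>
       measure_pmf.prob (pair_pmf (pmf_of_set (balanced_vecs k)) (pmf_of_set (balanced_vecs k)))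
         {(x, y). (bilin_Z k \<delta> x y)^2 / frob_sq k \<delta> \<in> {c1..c2}} \<ge> \<rho>)"
  using prob_bilin_Z_sq_in_interval
  by (intro exI[of _ "1/32"] exI[of _ 9216] exI[of _ "1/589824"]) auto

end
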